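(* Let $(M,\cdot,1)$ be a monoid, $\Sigma$ a finite alphabet, and $\ell:\Sigma^*\to M$ an $M$-language. If there exists a factorization $(g,f)$ on $L$ such that the right congruence $\equiv^{(g,f)}_\ell$ on $\Sigma^*$ has finite index, then $\ell$ is a recognizable $M$-language.
   Context: $L$ is the set of all functions $\Sigma^*\to M$; $\varepsilon$ is the empty word. A factorization on $L$ is a pair $(g,f)$ of functions $g:L\to M$, $f:L\to L$ with $g(\ell)\cdot f(\ell)=\ell$ for all $\ell\in L$, where $(m\cdot\ell)(\gamma)=m\cdot\ell(\gamma)$. For a word $\alpha$, $\Delta_\alpha:L\to L$ is $\Delta_\alpha(\ell)(\gamma)=\ell(\alpha\gamma)$. Define $S^{(g,f)}_\varepsilon$ as the identity on $L$ and $S^{(g,f)}_{\alpha\sigma}=f\circ\Delta_\sigma\circ S^{(g,f)}_\alpha$ for $\sigma\in\Sigma$. The relation $\equiv^{(g,f)}_\ell$ is defined by $\alpha\equiv^{(g,f)}_\ell\beta\iff S^{(g,f)}_\alpha(\ell)=S^{(g,f)}_\beta(\ell)$; finite index means finitely many classes. An $M$-DFA is a tuple $(Q,\Sigma,u,i_u,\delta,w,\rho)$ with $Q$ finite nonempty, initial state $u$, initial value $i_u\in M$, $\delta:Q\times\Sigma\to Q$, $w:Q\times\Sigma\to M$, $\rho:Q\to M$; with $q\alpha$ the extended transition and $w^*(q,\varepsilon)=1$, $w^*(q,\alpha\sigma)=w^*(q,\alpha)\cdot w(q\alpha,\sigma)$, it recognizes $\alpha\mapsto i_u\cdot w^*(u,\alpha)\cdot\rho(u\alpha)$.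 Recognizable means recognized by some $M$-DFA. *)

theory Defs
  imports Main
begin

type_synonym ('s, 'm) mlang = "'s list \<Rightarrow> 'm"

definition scal :: "'m::monoid_mult \<Rightarrow> ('s, 'm) mlang \<Rightarrow> ('s, 'm) mlang" where
  "scal m l = (\<lambda>\<gamma>. m * l \<gamma>)"

definition is_factorization ::
  "(('s, 'm::monoid_mult) mlang \<Rightarrow> 'm) \<Rightarrow> (('s, 'm) mlang \<Rightarrow> ('s, 'm) mlang) \<Rightarrow> bool" where
  "is_factorization g f \<longleftrightarrow> (\<forall>l. scal (g l) (f l) = l)"

definition Delta :: "'s list \<Rightarrow> ('s, 'm) mlang \<Rightarrow> ('s, 'm) mlang" where
  "Delta \<alpha> l = (\<lambda>\<gamma>. l (\<alpha> @ \<gamma>))"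

definition S :: "(('s, 'm) mlang \<Rightarrow> ('s, 'm) mlang) \<Rightarrow> 's list \<Rightarrow> ('s, 'm) mlang \<Rightarrow> ('s, 'm) mlang" where
  "S f \<alpha> = foldl (\<lambda>h \<sigma>. f \<circ> Delta [\<sigma>] \<circ> h) id \<alpha>"

lemma S_Nil: "S f [] = id" by (simp add: S_def)
lemma S_snoc: "S f (\<alpha> @ [\<sigma>]) = f \<circ> Delta [\<sigma>] \<circ> S f \<alpha>" by (simp add: S_def)

definition equiv_gf :: "(('s, 'm) mlang \<Rightarrow> ('s, 'm) mlang) \<Rightarrow> ('s, 'm) mlang \<Rightarrow> 's list \<Rightarrow> 's list \<Rightarrow> bool" where
  "equiv_gf f l \<alpha> \<beta> \<longleftrightarrow> S f \<alpha> l = S f \<beta> l"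

definition finite_index :: "('a \<Rightarrow> 'a \<Rightarrow> bool) \<Rightarrow> bool" where
  "finite_index R \<longleftrightarrow> finite (UNIV // {(x, y). R x y})"

definition dstar :: "('q \<Rightarrow> 's \<Rightarrow> 'q) \<Rightarrow> 'q \<Rightarrow> 's list \<Rightarrow> 'q" where
  "dstar \<delta> q \<alpha> = foldl \<delta> q \<alpha>"

text \<open>w*(q,[]) = 1, w*(q, alpha sigma) = w*(q,alpha) * w(q alpha, sigma).\<close>
definition wstar :: "('q \<Rightarrow> 's \<Rightarrow> 'q) \<Rightarrow> ('q \<Rightarrow> 's \<Rightarrow> 'm::monoid_mult) \<Rightarrow> 'q \<Rightarrow> 's list \<Rightarrow> 'm" where
  "wstar \<delta> w q \<alpha> = snd (foldl (\<lambda>(p, m) \<sigma>. (\<delta> p \<sigma>, m * w p \<sigma>)) (q, 1) \<alpha>)"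

definition is_MDFA :: "'q set \<Rightarrow> 'q \<Rightarrow> ('q \<Rightarrow> 's \<Rightarrow> 'q) \<Rightarrow> bool" where
  "is_MDFA Q u \<delta> \<longleftrightarrow> finite Q \<and> u \<in> Q \<and> (\<forall>q\<in>Q. \<forall>\<sigma>. \<delta> q \<sigma> \<in> Q)"

definition MDFA_lang ::
  "'q \<Rightarrow> 'm::monoid_mult \<Rightarrow> ('q \<Rightarrow> 's \<Rightarrow> 'q) \<Rightarrow> ('q \<Rightarrow> 's \<Rightarrow> 'm) \<Rightarrow> ('q \<Rightarrow> 'm) \<Rightarrow> ('s, 'm) mlang" where
  "MDFA_lang u iu \<delta> w \<rho> = (\<lambda>\<alpha>. iu * wstar \<delta> w u \<alpha> * \<rho> (dstar \<delta> u \<alpha>))"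

definition recognizable :: "('s, 'm::monoid_mult) mlang \<Rightarrow> bool" where
  "recognizable l \<longleftrightarrow> (\<exists>(Q::nat set) u iu \<delta> w \<rho>. is_MDFA Q u \<delta> \<and> l = MDFA_lang u iu \<delta> w \<rho>)"

end

theory Submission
  imports Defs
begin

text \<open>The residuals \<open>S\<^sub>\<alpha> \<ell>\<close> are the states of an automaton: reading \<open>\<sigma>\<close> in state
  \<open>X\<close> leads to \<open>f (\<Delta>\<^sub>\<sigma> X)\<close> with weight \<open>g (\<Delta>\<^sub>\<sigma> X)\<close>, and \<open>X\<close> emits \<open>X \<epsilon>\<close>.
  Splitting off one weight at a time with \<open>g X \<cdot> f X = X\<close> gives
  \<open>\<ell> (\<alpha>\<gamma>) = w\<^sup>*(\<ell>, \<alpha>) \<cdot> (S\<^sub>\<alpha> \<ell>) \<gamma>\<close>, so the automaton recognizes \<open>\<ell>\<close>; it has finitely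
  many states because \<open>\<equiv>\<^sub>\<ell>\<close> is the kernel of \<open>\<alpha> \<mapsto> S\<^sub>\<alpha> \<ell>\<close>.\<close>

lemma dstar_Nil [simp]: "dstar \<delta> q [] = q"
  by (simp add: dstar_def)

lemma dstar_snoc [simp]: "dstar \<delta> q (\<alpha> @ [\<sigma>]) = \<delta> (dstar \<delta> q \<alpha>) \<sigma>"
  by (simp add: dstar_def)

lemma fst_foldl_weighted_step:
  "fst (foldl (\<lambda>(p, m) \<sigma>. (\<delta> p \<sigma>, m * w p \<sigma>)) (q, m) \<alpha>) = dstar \<delta> q \<alpha>"
  by (induction \<alpha> arbitrary: q m) (simp_all add: dstar_def)

lemma wstar_Nil [simp]: "wstar \<delta> w q [] = 1"
  by (simp add: wstar_def)

lemma wstar_snoc [simp]: "wstar \<delta> w q (\<alpha> @ [\<sigma>]) = wstar \<delta> w q \<alpha> * w (dstar \<delta> q \<alpha>) \<sigma>"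
proof -
  let ?F = "\<lambda>(p, m) \<sigma>. (\<delta> p \<sigma>, m * w p \<sigma>)"
  have "foldl ?F (q, 1) \<alpha> = (dstar \<delta> q \<alpha>, wstar \<delta> w q \<alpha>)"
    unfolding wstar_def by (simp add: prod_eq_iff fst_foldl_weighted_step)
  then show ?thesis
    unfolding wstar_def[of \<delta> w q "\<alpha> @ [\<sigma>]"] by simp
qed

lemma dstar_in_MDFA_states:
  assumes "is_MDFA Q u \<delta>"
  shows "dstar \<delta> u \<alpha> \<in> Q"
  using assms by (induction \<alpha> rule: rev_induct) (auto simp: is_MDFA_def)

lemma recognizable_MDFA_lang:
  fixes Q :: "'q set"
  assumes "is_MDFA Q u \<delta>"
  shows "recognizable (MDFA_lang u iu \<delta> w \<rho>)"
proof -
  from assms have "finite Q"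
    by (simp add: is_MDFA_def)
  then obtain h :: "'q \<Rightarrow> nat" where h: "inj_on h Q"
    using finite_imp_inj_to_nat_seg by blast
  define dec where "dec = inv_into Q h"
  define \<delta>' where "\<delta>' = (\<lambda>n \<sigma>. h (\<delta> (dec n) \<sigma>))"
  define w' where "w' = (\<lambda>n \<sigma>. w (dec n) \<sigma>)"
  define \<rho>' where "\<rho>' = (\<lambda>n. \<rho> (dec n))"
  have dec_h: "dec (h q) = q" if "q \<in> Q" for q
    using h that by (simp add: dec_def)
  have dstar_h: "dstar \<delta>' (h u) \<alpha> = h (dstar \<delta> u \<alpha>)" for \<alpha>
    by (induction \<alpha> rule: rev_induct)
      (simp_all add: \<delta>'_def dec_h dstar_in_MDFA_states[OF assms])
  have wstar_h: "wstar \<delta>' w' (h u) \<alpha> = wstar \<delta> w u \<alpha>" for \<alpha>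
    by (induction \<alpha> rule: rev_induct)
      (simp_all add: w'_def dstar_h dec_h dstar_in_MDFA_states[OF assms])
  have "is_MDFA (h ` Q) (h u) \<delta>'"
    using assms \<open>finite Q\<close> by (auto simp: is_MDFA_def \<delta>'_def dec_h)
  moreover have "MDFA_lang u iu \<delta> w \<rho> = MDFA_lang (h u) iu \<delta>' w' \<rho>'"
    by (simp add: MDFA_lang_def dstar_h wstar_h \<rho>'_def dec_h dstar_in_MDFA_states[OF assms])
  ultimately show ?thesis
    unfolding recognizable_def by (intro exI conjI)
qed

lemma finite_range_if_finite_index_kernel:
  assumes "finite_index (\<lambda>x y. F x = F y)"
  shows "finite (range F)"
  using assms bij_betw_finite[OF bij_betw_image_quotient_kernel[of F UNIV]]
  by (simp add: finite_index_def kernel_def)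

lemma is_factorization_apply:
  assumes "is_factorization g f"
  shows "g X * f X \<gamma> = X \<gamma>"
  using assms by (metis is_factorization_def scal_def)

definition residual_trans ::
    "(('s, 'm) mlang \<Rightarrow> ('s, 'm) mlang) \<Rightarrow> ('s, 'm) mlang \<Rightarrow> 's \<Rightarrow> ('s, 'm) mlang"
  where "residual_trans f X \<sigma> = f (Delta [\<sigma>] X)"

definition residual_weight :: "(('s, 'm) mlang \<Rightarrow> 'm) \<Rightarrow> ('s, 'm) mlang \<Rightarrow> 's \<Rightarrow> 'm"
  where "residual_weight g X \<sigma> = g (Delta [\<sigma>] X)"

lemma dstar_residual_trans: "dstar (residual_trans f) l \<alpha> = S f \<alpha> l"
  by (induction \<alpha> rule: rev_induct) (simp_all add: S_Nil S_snoc residual_trans_def)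

lemma residual_decomposition:
  assumes "is_factorization g f"
  shows "l (\<alpha> @ \<gamma>) = wstar (residual_trans f) (residual_weight g) l \<alpha> * S f \<alpha> l \<gamma>"
proof (induction \<alpha> arbitrary: \<gamma> rule: rev_induct)
  case Nil
  show ?case
    by (simp add: S_Nil)
next
  case (snoc \<sigma> \<alpha>)
  let ?X = "Delta [\<sigma>] (S f \<alpha> l)"
  have "l ((\<alpha> @ [\<sigma>]) @ \<gamma>) = wstar (residual_trans f) (residual_weight g) l \<alpha> * ?X \<gamma>"
    using snoc.IH[of "\<sigma> # \<gamma>"] by (simp add: Delta_def)
  also have "?X \<gamma> = g ?X * f ?X \<gamma>"
    by (simp add: is_factorization_apply[OF assms])
  finally show ?case
    by (simp add: dstar_residual_trans residual_weight_def S_snoc mult.assoc)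
qed

lemma MDFA_lang_residual_automaton:
  assumes "is_factorization g f"
  shows "MDFA_lang l 1 (residual_trans f) (residual_weight g) (\<lambda>X. X []) = l"
proof
  fix \<alpha>
  show "MDFA_lang l 1 (residual_trans f) (residual_weight g) (\<lambda>X. X []) \<alpha> = l \<alpha>"
    using residual_decomposition[OF assms, of l \<alpha> "[]"]
    by (simp add: MDFA_lang_def dstar_residual_trans)
qed

lemma is_MDFA_residual_automaton:
  assumes "finite (range (\<lambda>\<alpha>. S f \<alpha> l))"
  shows "is_MDFA (range (\<lambda>\<alpha>. S f \<alpha> l)) l (residual_trans f)"
  unfolding is_MDFA_def
proof (intro conjI ballI allI)
  show "l \<in> range (\<lambda>\<alpha>. S f \<alpha> l)"
    by (metis S_Nil id_apply rangeI)
next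
  fix X \<sigma>
  assume "X \<in> range (\<lambda>\<alpha>. S f \<alpha> l)"
  then obtain \<alpha> where "X = S f \<alpha> l"
    by blast
  then have "residual_trans f X \<sigma> = S f (\<alpha> @ [\<sigma>]) l"
    by (simp add: S_snoc residual_trans_def)
  then show "residual_trans f X \<sigma> \<in> range (\<lambda>\<alpha>. S f \<alpha> l)"
    by simp
qed (use assms in simp)

theorem corollary1:
  fixes l :: "'s::finite list \<Rightarrow> 'm::monoid_mult"
  assumes "\<exists>g f. is_factorization g f \<and> finite_index (equiv_gf f l)"
  shows "recognizable l"
proof -
  obtain g f where fac: "is_factorization g f" and fin: "finite_index (equiv_gf f l)"
    using assms by blast
  have "finite (range (\<lambda>\<alpha>. S f \<alpha> l))"
    using fin unfolding equiv_gf_def by (rule finite_range_if_finite_index_kernel)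
  then have "recognizable (MDFA_lang l 1 (residual_trans f) (residual_weight g) (\<lambda>X. X []))"
    by (rule recognizable_MDFA_lang[OF is_MDFA_residual_automaton])
  then show ?thesis
    by (simp only: MDFA_lang_residual_automaton[OF fac])
qed

end
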